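(* Let $N\ge1$, $\mathsf{C}(x)=\tfrac12\log(1+x)$, and for non-negative SNRs $\mathbf{S}=(\mathsf{SNR}_{s,r},\mathsf{SNR}_{s,1},\dots,\mathsf{SNR}_{s,N},\mathsf{SNR}_{r,1},\dots,\mathsf{SNR}_{r,N})$ define $$h_j(\mathbf{S})=\mathsf{SNR}_{s,j}+\frac{\mathsf{SNR}_{r,j}\,\mathsf{SNR}_{s,r}}{\mathsf{SNR}_{s,j}+\mathsf{SNR}_{r,j}+\mathsf{SNR}_{s,r}+1},\qquad \widetilde R_{QF}(\mathbf{S})=\min_{1\le j\le N}\mathsf{C}(h_j(\mathbf{S})).$$ If $\mathsf{SNR}_{s,1},\dots,\mathsf{SNR}_{s,N}\ge0$ are held fixed, then $\widetilde R_{QF}$ is quasi-concave as a function of the remaining SNRs $(\mathsf{SNR}_{s,r},\mathsf{SNR}_{r,1},\dots,\mathsf{SNR}_{r,N})\in[0,\infty)^{N+1}$.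
   Context: $\widetilde R_{QF}$ is a quantize-forward achievable rate (Gaussian inputs, optimized quantization noise) for a real AWGN multicast relay channel with source $s$, relay $r$, destinations $1,\dots,N$ and link SNRs $\mathsf{SNR}_{u,v}\ge0$. A function $F$ on a convex set is quasi-concave if $F(\lambda x_1+(1-\lambda)x_2)\ge\min(F(x_1),F(x_2))$ for all $x_1,x_2$ and $\lambda\in[0,1]$. *)

theory Defs
  imports "HOL-Analysis.Analysis"
begin

definition Cap :: "real \<Rightarrow> real" where
  "Cap x = (1/2) * ln (1 + x)"

text \<open>h_j with fixed source-destination SNRs ssd, source-relay SNR ssr, relay-destination SNRs srd\<close>
definition h_QF :: "(nat \<Rightarrow> real) \<Rightarrow> real \<Rightarrow> (nat \<Rightarrow> real) \<Rightarrow> nat \<Rightarrow> real" where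
  "h_QF ssd ssr srd j = ssd j + (srd j * ssr) / (ssd j + srd j + ssr + 1)"

definition R_QF :: "nat \<Rightarrow> (nat \<Rightarrow> real) \<Rightarrow> real \<Rightarrow> (nat \<Rightarrow> real) \<Rightarrow> real" where
  "R_QF N ssd ssr srd = (MIN j\<in>{1..N}. Cap (h_QF ssd ssr srd j))"

text \<open>Domain [0,\<infinity>)^(N+1) of (SNR_{s,r}, SNR_{r,1..N}); relay SNRs are indexed by 1..N
  and set to 0 outside that range (a canonical representative).\<close>
definition QF_dom :: "nat \<Rightarrow> (real \<times> (nat \<Rightarrow> real)) set" where
  "QF_dom N = {(ssr, srd). ssr \<ge> 0 \<and> (\<forall>j\<in>{1..N}. srd j \<ge> 0) \<and> (\<forall>j. j \<notin> {1..N} \<longrightarrow> srd j = 0)}"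

definition cvx_comb :: "real \<Rightarrow> real \<times> (nat \<Rightarrow> real) \<Rightarrow> real \<times> (nat \<Rightarrow> real) \<Rightarrow> real \<times> (nat \<Rightarrow> real)" where
  "cvx_comb t x y = (t * fst x + (1 - t) * fst y, \<lambda>j. t * snd x j + (1 - t) * snd y j)"

definition quasi_concave_on :: "(real \<times> (nat \<Rightarrow> real)) set \<Rightarrow> (real \<times> (nat \<Rightarrow> real) \<Rightarrow> real) \<Rightarrow> bool" where
  "quasi_concave_on S F \<longleftrightarrow>
     (\<forall>x1\<in>S. \<forall>x2\<in>S. \<forall>t::real. 0 \<le> t \<and> t \<le> 1 \<longrightarrow>
        F (cvx_comb t x1 x2) \<ge> min (F x1) (F x2))"

end

theory Submission
  imports Defs
begin

text \<open>Each \<open>h_j\<close> is \<open>SNR_{s,j}\<close> plus \<open>g(x, y) = x y / (x + y + b)\<close> at \<open>x = SNR_{r,j}\<close>,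
  \<open>y = SNR_{s,r}\<close>, \<open>b = SNR_{s,j} + 1\<close>. For \<open>c > 0\<close> the superlevel set \<open>g \<ge> c\<close> of the
  non-negative quadrant is \<open>{x, y > c, (x - c)(y - c) \<ge> c^2 + c b}\<close>, the convex region above a
  hyperbola, so \<open>g\<close> is quasi-concave. This survives adding a constant, composing with the
  increasing function \<open>C\<close> and minimising over \<open>j\<close>.\<close>

lemma cross_products_sum_ge:
  fixes p q p' q' K :: real
  assumes "p \<ge> 0" "q \<ge> 0" "p' \<ge> 0" "q' \<ge> 0" "K \<ge> 0" "p * q \<ge> K" "p' * q' \<ge> K"
  shows "p * q' + p' * q \<ge> 2 * K"
proof -
  have "(p * q') * (p' * q) = (p * q) * (p' * q')" by (simp add: ac_simps)
  also have "\<dots> \<ge> K * K" using assms by (intro mult_mono) auto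
  finally have prod: "(p * q') * (p' * q) \<ge> K * K" .
  have "(p * q' + p' * q)\<^sup>2 = 4 * ((p * q') * (p' * q)) + (p * q' - p' * q)\<^sup>2"
    by algebra
  moreover have "(2 * K)\<^sup>2 = 4 * (K * K)" by algebra
  ultimately have "(2 * K)\<^sup>2 \<le> (p * q' + p' * q)\<^sup>2"
    using prod zero_le_power2[of "p * q' - p' * q"] by linarith
  moreover have "p * q' + p' * q \<ge> 0" using assms by simp
  ultimately show ?thesis by (rule power2_le_imp_le)
qed

lemma convex_comb_product_ge:
  fixes u1 v1 u2 v2 K t :: real
  assumes "u1 \<ge> 0" "v1 \<ge> 0" "u2 \<ge> 0" "v2 \<ge> 0" "K \<ge> 0" "u1 * v1 \<ge> K" "u2 * v2 \<ge> K"
    and "0 \<le> t" "t \<le> 1"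
  shows "(t * u1 + (1 - t) * u2) * (t * v1 + (1 - t) * v2) \<ge> K"
proof -
  define s where "s = 1 - t"
  have "s \<ge> 0" using assms(9) by (simp add: s_def)
  have cross: "u1 * v2 + u2 * v1 \<ge> 2 * K"
    using cross_products_sum_ge assms(1-7) by blast
  have "K = (t + s) * (t + s) * K" by (simp add: s_def)
  also have "\<dots> = t * t * K + s * s * K + t * s * (2 * K)" by (simp add: algebra_simps)
  also have "\<dots> \<le> t * t * (u1 * v1) + s * s * (u2 * v2) + t * s * (u1 * v2 + u2 * v1)"
    using assms(6,7,8) \<open>s \<ge> 0\<close> cross by (intro add_mono mult_left_mono) auto
  also have "\<dots> = (t * u1 + s * u2) * (t * v1 + s * v2)" by (simp add: algebra_simps)
  finally show ?thesis by (simp add: s_def)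
qed

lemma product_ratio_superlevel_gt:
  fixes x y b c :: real
  assumes "b > 0" "c > 0" "x \<ge> 0" "y \<ge> 0" "x * y \<ge> c * (x + y + b)"
  shows "x > c" "y > c"
proof -
  have "c * (x + b) > 0" "c * (y + b) > 0" using assms by simp_all
  then have "x * y > c * y" "x * y > x * c" using assms(5) by (simp_all add: algebra_simps)
  moreover have "c * y \<ge> 0" using assms(2,4) by simp
  ultimately have "x * y > 0" by linarith
  then have "x > 0" "y > 0" using assms(3,4) by (auto simp: zero_less_mult_iff)
  with \<open>x * y > c * y\<close> \<open>x * y > x * c\<close> show "x > c" "y > c" by simp_all
qed

lemma product_ratio_superlevel_convex:
  fixes b c x1 y1 x2 y2 t :: real
  assumes "b > 0" "c > 0" "x1 \<ge> 0" "y1 \<ge> 0" "x2 \<ge> 0" "y2 \<ge> 0" "0 \<le> t" "t \<le> 1"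
    and "x1 * y1 \<ge> c * (x1 + y1 + b)" "x2 * y2 \<ge> c * (x2 + y2 + b)"
  defines "x \<equiv> t * x1 + (1 - t) * x2" and "y \<equiv> t * y1 + (1 - t) * y2"
  shows "x * y \<ge> c * (x + y + b)"
proof -
  have "x * y \<ge> c * (x + y + b) \<longleftrightarrow> (x - c) * (y - c) \<ge> c * c + c * b" for x y
    by (simp add: algebra_simps)
  moreover have "x - c = t * (x1 - c) + (1 - t) * (x2 - c)" "y - c = t * (y1 - c) + (1 - t) * (y2 - c)"
    by (simp_all add: x_def y_def algebra_simps)
  moreover have "x1 > c" "y1 > c" "x2 > c" "y2 > c"
    using product_ratio_superlevel_gt assms(1-6,9,10) by blast+
  ultimately show ?thesis
    using assms(1,2,7-10) by (auto intro!: convex_comb_product_ge)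
qed

lemma product_ratio_quasiconcave:
  fixes b x1 y1 x2 y2 t :: real
  assumes "b > 0" "x1 \<ge> 0" "y1 \<ge> 0" "x2 \<ge> 0" "y2 \<ge> 0" "0 \<le> t" "t \<le> 1"
  defines "x \<equiv> t * x1 + (1 - t) * x2" and "y \<equiv> t * y1 + (1 - t) * y2"
  shows "x * y / (x + y + b) \<ge> min (x1 * y1 / (x1 + y1 + b)) (x2 * y2 / (x2 + y2 + b))"
    (is "_ \<ge> ?c")
proof (cases "?c > 0")
  case False
  have "x \<ge> 0" "y \<ge> 0" using assms by (simp_all add: x_def y_def)
  with assms(1) False show ?thesis by (auto intro: order.trans[of _ 0])
next
  case True
  have "?c \<le> x1 * y1 / (x1 + y1 + b)" "?c \<le> x2 * y2 / (x2 + y2 + b)" by simp_all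
  moreover have "x1 + y1 + b > 0" "x2 + y2 + b > 0" using assms(1-5) by simp_all
  ultimately have "x1 * y1 \<ge> ?c * (x1 + y1 + b)" "x2 * y2 \<ge> ?c * (x2 + y2 + b)"
    by (simp_all only: pos_le_divide_eq)
  then have "x * y \<ge> ?c * (x + y + b)"
    unfolding x_def y_def using assms(1-7) True by (intro product_ratio_superlevel_convex)
  moreover have "x + y + b > 0" using assms by (simp add: x_def y_def add_nonneg_pos)
  ultimately show ?thesis by (simp add: pos_le_divide_eq)
qed

lemma h_QF_quasiconcave:
  assumes "ssd j \<ge> 0" "a1 \<ge> 0" "a2 \<ge> 0" "f1 j \<ge> 0" "f2 j \<ge> 0" "0 \<le> t" "t \<le> 1"
  shows "h_QF ssd (t * a1 + (1 - t) * a2) (\<lambda>j. t * f1 j + (1 - t) * f2 j) j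
           \<ge> min (h_QF ssd a1 f1 j) (h_QF ssd a2 f2 j)"
proof -
  have h: "h_QF ssd a f j = ssd j + f j * a / (f j + a + (ssd j + 1))" for a f
    by (simp add: h_QF_def add_ac)
  have "min (f1 j * a1 / (f1 j + a1 + (ssd j + 1))) (f2 j * a2 / (f2 j + a2 + (ssd j + 1)))
     \<le> (t * f1 j + (1 - t) * f2 j) * (t * a1 + (1 - t) * a2)
          / ((t * f1 j + (1 - t) * f2 j) + (t * a1 + (1 - t) * a2) + (ssd j + 1))"
    using assms by (intro product_ratio_quasiconcave) simp_all
  then show ?thesis by (simp add: h min_add_distrib_left[symmetric])
qed

lemma h_QF_nonneg:
  assumes "ssd j \<ge> 0" "a \<ge> 0" "f j \<ge> 0"
  shows "h_QF ssd a f j \<ge> 0"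
  using assms by (simp add: h_QF_def)

lemma Cap_mono: "0 \<le> u \<Longrightarrow> u \<le> v \<Longrightarrow> Cap u \<le> Cap v"
  by (simp add: Cap_def)

lemma mono_on_ge_min:
  fixes f :: "real \<Rightarrow> real"
  assumes "\<And>u v. 0 \<le> u \<Longrightarrow> u \<le> v \<Longrightarrow> f u \<le> f v" "a \<ge> 0" "b \<ge> 0" "z \<ge> min a b"
  shows "f z \<ge> min (f a) (f b)"
  using assms by (cases "a \<le> b") (force simp: min_def)+

lemma Min_image_ge_min:
  fixes F G H :: "'a \<Rightarrow> 'b::linorder"
  assumes "finite A" "A \<noteq> {}" "\<And>j. j \<in> A \<Longrightarrow> F j \<ge> min (G j) (H j)"
  shows "(MIN j\<in>A. F j) \<ge> min (MIN j\<in>A. G j) (MIN j\<in>A. H j)"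
proof -
  have "min (MIN j\<in>A. G j) (MIN j\<in>A. H j) \<le> F j" if "j \<in> A" for j
  proof -
    have "min (MIN j\<in>A. G j) (MIN j\<in>A. H j) \<le> min (G j) (H j)"
      using that assms(1) by (intro min.mono) simp_all
    then show ?thesis using assms(3)[OF that] by (rule order.trans)
  qed
  then show ?thesis using assms(1,2) by simp
qed

theorem theorem3:
  fixes N :: nat and ssd :: "nat \<Rightarrow> real"
  assumes "N \<ge> 1"
    and "\<forall>j\<in>{1..N}. ssd j \<ge> 0"
  shows "quasi_concave_on (QF_dom N) (\<lambda>(ssr, srd). R_QF N ssd ssr srd)"
  unfolding quasi_concave_on_def
proof (intro ballI allI impI)
  fix p1 p2 and t :: real
  assume "p1 \<in> QF_dom N" "p2 \<in> QF_dom N" and t: "0 \<le> t \<and> t \<le> 1"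
  then obtain a1 f1 a2 f2 where p: "p1 = (a1, f1)" "p2 = (a2, f2)"
    and nonneg: "a1 \<ge> 0" "a2 \<ge> 0" "\<forall>j\<in>{1..N}. f1 j \<ge> 0 \<and> f2 j \<ge> 0"
    unfolding QF_dom_def by auto
  have "Cap (h_QF ssd (t * a1 + (1 - t) * a2) (\<lambda>j. t * f1 j + (1 - t) * f2 j) j)
          \<ge> min (Cap (h_QF ssd a1 f1 j)) (Cap (h_QF ssd a2 f2 j))" if "j \<in> {1..N}" for j
    using that assms(2) nonneg t
    by (intro mono_on_ge_min[OF Cap_mono] h_QF_nonneg h_QF_quasiconcave) auto
  then have "R_QF N ssd (t * a1 + (1 - t) * a2) (\<lambda>j. t * f1 j + (1 - t) * f2 j)
               \<ge> min (R_QF N ssd a1 f1) (R_QF N ssd a2 f2)"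
    unfolding R_QF_def using assms(1) by (intro Min_image_ge_min) auto
  then show "(\<lambda>(ssr, srd). R_QF N ssd ssr srd) (cvx_comb t p1 p2)
               \<ge> min ((\<lambda>(ssr, srd). R_QF N ssd ssr srd) p1) ((\<lambda>(ssr, srd). R_QF N ssd ssr srd) p2)"
    by (simp add: p cvx_comb_def)
qed

end
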